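(* Let $\mathcal A$ be a well-structured abstract domain with functions $(\alpha,\gamma)$, and let monotone abstract operators $\llbracket e\rrbracket^\#:\mathcal A\to\mathcal A$ be given for each basic command $e$. If $\llbracket e\rrbracket^\#$ is a complete abstraction of $\llbracket e\rrbracket$ for every basic command $e$, then the induced incorrectness proof system described in the context is sound and relatively complete: for all $a,b\in\mathcal A$ and programs $S$, $\vdash_{\mathrm{in}}[a]\,S\,[b]$ iff $\models_{\mathrm{in}}[a]\,S\,[b]$.
   Context: Fix a finite set $V$ of quantum variables, each a qubit with state space $\mathcal H_q\cong\mathbb C^2$; for $W\subseteq V$, $\mathcal H_W=\bigotimes_{q\in W}\mathcal H_q$. Operators and subspaces on $\mathcal H_W$ are identified with their cylindrical extensions to $\mathcal H_V$, and a subspace is identified with its orthogonal projector; $P^\perp$ is the orthocomplement. $\mathcal D(\mathcal H_V)$ is the set of partial density operators (positive, trace $\le1$). Programs: $S::=\mathbf{skip}\mid \bar q:=|0\rangle\mid \bar q\mathrel{*{=}}U\mid \mathbf{assert}\ P[\bar q]\mid S_0;S_1\mid \mathbf{if}\ P[\bar q]\ \mathbf{then}\ S_1\ \mathbf{else}\ S_0\ \mathbf{end}\mid\mathbf{while}\ P[\bar q]\ \mathbf{do}\ S\ \mathbf{end}$, with $\bar q=q_1,\dots,q_t$ distinct variables, $U$ unitary on $\mathcal H_{\bar q}$, $P$ a subspace of $\mathcal H_{\bar q}$; the first four forms are the basic commands. Semantics $\llbracket S\rrbracket:\mathcal D(\mathcal H_V)\to\mathcal D(\mathcal H_V)$: $\llbracket\mathbf{skip}\rrbracket(\rho)=\rho$;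 $\llbracket\bar q:=|0\rangle\rrbracket(\rho)=\sum_{i=0}^{2^t-1}|0\rangle_{\bar q}\langle i|\rho|i\rangle_{\bar q}\langle0|$; $\llbracket\bar q\mathrel{*{=}}U\rrbracket(\rho)=U\rho U^\dagger$; $\llbracket\mathbf{assert}\ P[\bar q]\rrbracket(\rho)=P\rho P$; $\llbracket S_0;S_1\rrbracket=\llbracket S_1\rrbracket\circ\llbracket S_0\rrbracket$; $\llbracket\mathbf{if}\ P[\bar q]\ \mathbf{then}\ S_1\ \mathbf{else}\ S_0\ \mathbf{end}\rrbracket(\rho)=\llbracket\mathbf{assert}\ P[\bar q];S_1\rrbracket(\rho)+\llbracket\mathbf{assert}\ P^\perp[\bar q];S_0\rrbracket(\rho)$; $\llbracket\mathbf{while}\ P[\bar q]\ \mathbf{do}\ S\ \mathbf{end}\rrbracket(\rho)=\sum_{i\ge0}\llbracket(\mathbf{assert}\ P[\bar q];S)^i;\mathbf{assert}\ P^\perp[\bar q]\rrbracket(\rho)$, where $T^i$ is $i$-fold sequential composition ($T^0=\mathbf{skip}$). The concrete domain is $\mathcal Q=2^{\mathcal D(\mathcal H_V)}$ ordered by inclusion, and $\llbracket S\rrbracket(R)=\{\llbracket S\rrbracket(\rho):\rho\in R\}$. A pair of monotone maps $(\alpha,\gamma)$ between posets is a Galois connection if $c\le\gamma(a)\iff\alpha(c)\le a$, and a Galois embedding if moreover $\alpha\circ\gamma=\mathrm{id}$. A complete lattice $(\mathcal A,\le_{\mathcal A},\vee,\wedge,\bot,\top)$ with monotone $\alpha:\mathcal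 Q\to\mathcal A$, $\gamma:\mathcal A\to\mathcal Q$ is a well-structured abstract domain if (a) $(\alpha,\gamma)$ is a Galois embedding, and (b) for any family $\rho_i\in\mathcal D(\mathcal H_V)$ and reals $x_i>0$ with $\sum_i x_i\rho_i\in\mathcal D(\mathcal H_V)$, $\alpha(\sum_i x_i\rho_i)=\bigvee_i\alpha(\rho_i)$, where $\alpha(\rho)=\alpha(\{\rho\})$. $f^\#$ is a complete abstraction of $f:\mathcal Q\to\mathcal Q$ if $\alpha\circ f=f^\#\circ\alpha$. The best abstraction of $\llbracket S\rrbracket$ is $\llbracket S\rrbracket^b=\alpha\circ\llbracket S\rrbracket\circ\gamma$. Induced incorrectness system: assertions are elements of $\mathcal A$; $\models_{\mathrm{in}}[a]\,S\,[b]$ iff $b\le_{\mathcal A}\llbracket S\rrbracket^b(a)$. Derivability $\vdash_{\mathrm{in}}$ is w.r.t. the rules: (Exp-In) $[a]\,e\,[\llbracket e\rrbracket^\#(a)]$ for every basic command $e$; (Seq-In) from $[a]\,S_0\,[a']$ and $[a']\,S_1\,[b]$ infer $[a]\,S_0;S_1\,[b]$; (Imp-In) from $a'\le_{\mathcal A}a$, $[a']\,S\,[b']$, $b\le_{\mathcal A}b'$ infer $[a]\,S\,[b]$; (Meas-In) from $[a]\,\mathbf{assert}\ P[\bar q];S_1\,[b_1]$ and $[a]\,\mathbf{assert}\ P^\perp[\bar q];S_0\,[b_0]$ infer $[a]\,\mathbf{if}\ P[\bar q]\ \mathbf{then}\ S_1\ \mathbf{else}\ S_0\ \mathbf{end}\,[b_0\vee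 b_1]$; (While-In) from $[a_i]\,\mathbf{assert}\ P[\bar q];S\,[a_{i+1}]$ and $[a_i]\,\mathbf{assert}\ P^\perp[\bar q]\,[b_i]$ for all $i\ge0$ infer $[a_0]\,\mathbf{while}\ P[\bar q]\ \mathbf{do}\ S\ \mathbf{end}\,[\bigvee_{i\ge0}b_i]$. *)

theory Defs
  imports Complex_Main "Jordan_Normal_Form.Matrix"
begin

text \<open>Quantum variables are the qubits 0,...,n-1, i.e. V = {0..<n}.  The state space
  H_V is identified with complex column vectors of dimension 2^n, basis index i
  encoding the bit string with qubit k equal to bit k of i.\<close>

definition adj :: "complex mat \<Rightarrow> complex mat" where
  "adj A = mat (dim_col A) (dim_row A) (\<lambda>(i,j). cnj (A $$ (j,i)))"

definition mtrace :: "complex mat \<Rightarrow> complex" where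
  "mtrace A = (\<Sum>i<dim_row A. A $$ (i,i))"

definition positive_op :: "nat \<Rightarrow> complex mat \<Rightarrow> bool" where
  "positive_op d A \<longleftrightarrow> A \<in> carrier_mat d d \<and>
     (\<forall>v :: nat \<Rightarrow> complex.
        let z = (\<Sum>i<d. \<Sum>j<d. cnj (v i) * A $$ (i,j) * v j) in Im z = 0 \<and> Re z \<ge> 0)"

definition Dens :: "nat \<Rightarrow> complex mat set" where
  "Dens n = {\<rho>. positive_op (2^n) \<rho> \<and> Re (mtrace \<rho>) \<le> 1}"

definition unitary_op :: "nat \<Rightarrow> complex mat \<Rightarrow> bool" where
  "unitary_op d U \<longleftrightarrow> U \<in> carrier_mat d d \<and> U * adj U = 1\<^sub>m d \<and> adj U * U = 1\<^sub>m d"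

text \<open>subspaces are identified with their orthogonal projectors\<close>
definition projector :: "nat \<Rightarrow> complex mat \<Rightarrow> bool" where
  "projector d P \<longleftrightarrow> P \<in> carrier_mat d d \<and> P * P = P \<and> adj P = P"

definition perp :: "nat list \<Rightarrow> complex mat \<Rightarrow> complex mat" where
  "perp qs P = 1\<^sub>m (2 ^ length qs) - P"

definition bitv :: "nat \<Rightarrow> nat \<Rightarrow> bool" where
  "bitv i k \<longleftrightarrow> odd (i div 2 ^ k)"

text \<open>index in H_{qs} (q_1 most significant) of the restriction of basis index i\<close>
definition loc :: "nat list \<Rightarrow> nat \<Rightarrow> nat" where
  "loc qs i = (\<Sum>m<length qs. if bitv i (qs ! m) then 2 ^ (length qs - 1 - m) else 0)"

text \<open>cylindrical extension A \<otimes> I of an operator A on H_{qs} to H_V\<close>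
definition ext :: "nat \<Rightarrow> nat list \<Rightarrow> complex mat \<Rightarrow> complex mat" where
  "ext n qs A = mat (2^n) (2^n) (\<lambda>(i,j).
      if (\<forall>k<n. k \<notin> set qs \<longrightarrow> bitv i k = bitv j k) then A $$ (loc qs i, loc qs j) else 0)"

definition ket0bra :: "nat list \<Rightarrow> nat \<Rightarrow> complex mat" where
  "ket0bra qs i = mat (2 ^ length qs) (2 ^ length qs) (\<lambda>(a,b). if a = 0 \<and> b = i then 1 else 0)"

definition msuminf :: "nat \<Rightarrow> (nat \<Rightarrow> complex mat) \<Rightarrow> complex mat" where
  "msuminf d f = mat d d (\<lambda>(a,b). \<Sum>k. f k $$ (a,b))"

datatype prog =
    Skip
  | Init "nat list"
  | Unit "nat list" "complex mat"
  | Assert "nat list" "complex mat"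
  | Seq prog prog
  | If "nat list" "complex mat" prog prog   \<comment> \<open>If qs P S1 S0 = if P[qs] then S1 else S0 end\<close>
  | While "nat list" "complex mat" prog

fun basic :: "prog \<Rightarrow> bool" where
  "basic Skip = True"
| "basic (Init qs) = True"
| "basic (Unit qs U) = True"
| "basic (Assert qs P) = True"
| "basic _ = False"

definition wf_reg :: "nat \<Rightarrow> nat list \<Rightarrow> bool" where
  "wf_reg n qs \<longleftrightarrow> qs \<noteq> [] \<and> distinct qs \<and> set qs \<subseteq> {..<n}"

fun wf_prog :: "nat \<Rightarrow> prog \<Rightarrow> bool" where
  "wf_prog n Skip = True"
| "wf_prog n (Init qs) = wf_reg n qs"
| "wf_prog n (Unit qs U) = (wf_reg n qs \<and> unitary_op (2 ^ length qs) U)"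
| "wf_prog n (Assert qs P) = (wf_reg n qs \<and> projector (2 ^ length qs) P)"
| "wf_prog n (Seq S0 S1) = (wf_prog n S0 \<and> wf_prog n S1)"
| "wf_prog n (If qs P S1 S0) = (wf_reg n qs \<and> projector (2 ^ length qs) P \<and> wf_prog n S1 \<and> wf_prog n S0)"
| "wf_prog n (While qs P S) = (wf_reg n qs \<and> projector (2 ^ length qs) P \<and> wf_prog n S)"

definition assert_op :: "nat \<Rightarrow> nat list \<Rightarrow> complex mat \<Rightarrow> complex mat \<Rightarrow> complex mat" where
  "assert_op n qs P \<rho> = ext n qs P * \<rho> * ext n qs P"

fun sem :: "nat \<Rightarrow> prog \<Rightarrow> complex mat \<Rightarrow> complex mat" where
  "sem n Skip \<rho> = \<rho>"
| "sem n (Init qs) \<rho> =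
     foldr (\<lambda>i M. ext n qs (ket0bra qs i) * \<rho> * adj (ext n qs (ket0bra qs i)) + M)
       [0..<2 ^ length qs] (0\<^sub>m (2^n) (2^n))"
| "sem n (Unit qs U) \<rho> = ext n qs U * \<rho> * adj (ext n qs U)"
| "sem n (Assert qs P) \<rho> = assert_op n qs P \<rho>"
| "sem n (Seq S0 S1) \<rho> = sem n S1 (sem n S0 \<rho>)"
| "sem n (If qs P S1 S0) \<rho> =
     sem n S1 (assert_op n qs P \<rho>) + sem n S0 (assert_op n qs (perp qs P) \<rho>)"
| "sem n (While qs P S) \<rho> =
     msuminf (2^n) (\<lambda>i. assert_op n qs (perp qs P) (((\<lambda>\<sigma>. sem n S (assert_op n qs P \<sigma>)) ^^ i) \<rho>))"

definition semQ :: "nat \<Rightarrow> prog \<Rightarrow> complex mat set \<Rightarrow> complex mat set" where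
  "semQ n S R = sem n S ` R"

text \<open>well-structured abstract domain: complete lattice 'a with a Galois embedding
  between Q = Pow (Dens n) and 'a, plus condition (b) for countable families.\<close>
definition well_structured ::
  "nat \<Rightarrow> (complex mat set \<Rightarrow> 'a::complete_lattice) \<Rightarrow> ('a \<Rightarrow> complex mat set) \<Rightarrow> bool" where
  "well_structured n \<alpha> \<gamma> \<longleftrightarrow>
     (\<forall>a. \<gamma> a \<subseteq> Dens n) \<and>
     (\<forall>R1 R2. R1 \<subseteq> R2 \<and> R2 \<subseteq> Dens n \<longrightarrow> \<alpha> R1 \<le> \<alpha> R2) \<and>
     mono \<gamma> \<and>
     (\<forall>R a. R \<subseteq> Dens n \<longrightarrow> (R \<subseteq> \<gamma> a \<longleftrightarrow> \<alpha> R \<le> a)) \<and>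
     (\<forall>a. \<alpha> (\<gamma> a) = a) \<and>
     (\<forall>(I :: nat set) (\<rho> :: nat \<Rightarrow> complex mat) (x :: nat \<Rightarrow> real).
        I \<noteq> {} \<and> (\<forall>i\<in>I. \<rho> i \<in> Dens n \<and> x i > 0) \<and>
        (\<forall>a<2^n. \<forall>b<2^n. summable (\<lambda>i. if i \<in> I then complex_of_real (x i) * \<rho> i $$ (a,b) else 0)) \<and>
        msuminf (2^n) (\<lambda>i. if i \<in> I then complex_of_real (x i) \<cdot>\<^sub>m \<rho> i else 0\<^sub>m (2^n) (2^n)) \<in> Dens n
        \<longrightarrow> \<alpha> {msuminf (2^n) (\<lambda>i. if i \<in> I then complex_of_real (x i) \<cdot>\<^sub>m \<rho> i else 0\<^sub>m (2^n) (2^n))}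
            = (SUP i\<in>I. \<alpha> {\<rho> i}))"

definition best_abs :: "nat \<Rightarrow> (complex mat set \<Rightarrow> 'a) \<Rightarrow> ('a \<Rightarrow> complex mat set) \<Rightarrow> prog \<Rightarrow> 'a \<Rightarrow> 'a" where
  "best_abs n \<alpha> \<gamma> S a = \<alpha> (semQ n S (\<gamma> a))"

definition valid_in :: "nat \<Rightarrow> (complex mat set \<Rightarrow> 'a::complete_lattice) \<Rightarrow> ('a \<Rightarrow> complex mat set)
    \<Rightarrow> 'a \<Rightarrow> prog \<Rightarrow> 'a \<Rightarrow> bool" where
  "valid_in n \<alpha> \<gamma> a S b \<longleftrightarrow> b \<le> best_abs n \<alpha> \<gamma> S a"

definition complete_abs :: "nat \<Rightarrow> (complex mat set \<Rightarrow> 'a) \<Rightarrow> prog \<Rightarrow> ('a \<Rightarrow> 'a) \<Rightarrow> bool" where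
  "complete_abs n \<alpha> e f \<longleftrightarrow> (\<forall>R. R \<subseteq> Dens n \<longrightarrow> \<alpha> (semQ n e R) = f (\<alpha> R))"

inductive derivable_in :: "(prog \<Rightarrow> 'a::complete_lattice \<Rightarrow> 'a) \<Rightarrow> 'a \<Rightarrow> prog \<Rightarrow> 'a \<Rightarrow> bool"
  for absop where
  ExpIn: "basic e \<Longrightarrow> derivable_in absop a e (absop e a)"
| SeqIn: "derivable_in absop a S0 a' \<Longrightarrow> derivable_in absop a' S1 b \<Longrightarrow>
          derivable_in absop a (Seq S0 S1) b"
| ImpIn: "a' \<le> a \<Longrightarrow> derivable_in absop a' S b' \<Longrightarrow> b \<le> b' \<Longrightarrow> derivable_in absop a S b"
| MeasIn: "derivable_in absop a (Seq (Assert qs P) S1) b1 \<Longrightarrow>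
           derivable_in absop a (Seq (Assert qs (perp qs P)) S0) b0 \<Longrightarrow>
           derivable_in absop a (If qs P S1 S0) (sup b0 b1)"
| WhileIn: "(\<forall>i. derivable_in absop (as i) (Seq (Assert qs P) S) (as (Suc i)) \<and>
                derivable_in absop (as i) (Assert qs (perp qs P)) (bs i)) \<Longrightarrow>
            derivable_in absop (as 0) (While qs P S) (SUP i. bs i)"

end

theory Submission
  imports Defs
begin

text \<open>Both directions rest on one fact: for every well-formed program S, \<alpha> (\<lbrakk>S\<rbrakk> R) depends
  only on \<alpha> R, i.e. the best abstraction of \<lbrakk>S\<rbrakk> is complete.  For basic commands this is the
  hypothesis, and sequential composition preserves it.  For measurements and loops, condition (b)
  turns \<alpha> of a finite or infinite sum of partial density operators into the join of the \<alpha>'s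
  of the summands, so the best abstraction of a measurement is the join of its two branches and
  that of a loop is the join of its unrollings.  The best abstraction is therefore compositional
  and monotone: soundness follows by rule induction, and since [a] S [\<alpha> (\<lbrakk>S\<rbrakk> (\<gamma> a))] is
  derivable by structural induction, completeness follows with (Imp-In).  The quantum side
  only has to show that programs map partial density operators to partial density operators
  and that the series defining a loop converges entrywise.\<close>

declare index_mult_mat(1)[simp del] minus_carrier_mat[simp]

section \<open>Cylindrical extension\<close>

lemma bitv_eq_bit: "bitv i k = bit i k"
  by (simp add: bitv_def bit_iff_odd)

lemma eq_if_bits_eq_below:
  fixes x y :: nat
  assumes "x < 2^n" "y < 2^n" "\<And>k. k < n \<Longrightarrow> bit x k = bit y k"
  shows "x = y"
proof -
  have "bit x k = bit y k" for k
  proof -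
    have "bit x k = bit (take_bit n x) k" "bit y k = bit (take_bit n y) k"
      using assms(1,2) by (simp_all add: take_bit_nat_eq_self)
    then show ?thesis using assms(3) by (auto simp: bit_take_bit_iff)
  qed
  then show ?thesis by (simp add: bit_eq_iff)
qed

lemma loc_eq_horner_sum:
  "loc qs i = horner_sum of_bool 2 (map (\<lambda>p. bit i (qs ! (length qs - 1 - p))) [0..<length qs])"
proof -
  let ?t = "length qs"
  have "loc qs i = (\<Sum>m<?t. of_bool (bit i (qs ! m)) * 2 ^ (?t - 1 - m))"
    unfolding loc_def by (intro sum.cong) (auto simp: bitv_eq_bit)
  also have "\<dots> = (\<Sum>p<?t. of_bool (bit i (qs ! (?t - 1 - p))) * 2 ^ p)"
    by (rule sum.reindex_bij_witness[where i="\<lambda>p. ?t - Suc p" and j="\<lambda>p. ?t - Suc p"]) auto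
  also have "\<dots> = horner_sum of_bool 2 (map (\<lambda>p. bit i (qs ! (?t - 1 - p))) [0..<?t])"
    by (simp add: horner_sum_eq_sum atLeast0LessThan)
  finally show ?thesis .
qed

lemma bit_loc: "bit (loc qs i) p \<longleftrightarrow> p < length qs \<and> bit i (qs ! (length qs - 1 - p))"
  unfolding loc_eq_horner_sum by (auto simp: bit_horner_sum_bit_iff)

lemma loc_less: "loc qs i < 2 ^ length qs"
  unfolding loc_eq_horner_sum
  using horner_sum_bound[of "map (\<lambda>p. bit i (qs ! (length qs - 1 - p))) [0..<length qs]"] by simp

definition agree_outside :: "nat \<Rightarrow> nat list \<Rightarrow> nat \<Rightarrow> nat \<Rightarrow> bool" where
  "agree_outside n qs i j \<longleftrightarrow> (\<forall>k<n. k \<notin> set qs \<longrightarrow> bit i k = bit j k)"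

lemma agree_outside_refl: "agree_outside n qs i i"
  by (simp add: agree_outside_def)

lemma agree_outside_sym: "agree_outside n qs i j \<Longrightarrow> agree_outside n qs j i"
  by (simp add: agree_outside_def)

lemma agree_outside_trans: "agree_outside n qs i j \<Longrightarrow> agree_outside n qs j k \<Longrightarrow> agree_outside n qs i k"
  by (simp add: agree_outside_def)

lemma ext_entry:
  "i < 2^n \<Longrightarrow> j < 2^n \<Longrightarrow>
    ext n qs A $$ (i,j) = (if agree_outside n qs i j then A $$ (loc qs i, loc qs j) else 0)"
  by (simp add: ext_def agree_outside_def bitv_eq_bit)

lemma ext_carrier [simp]: "ext n qs A \<in> carrier_mat (2^n) (2^n)"
  by (simp add: ext_def)

lemma dim_ext [simp]: "dim_row (ext n qs A) = 2^n" "dim_col (ext n qs A) = 2^n"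
  by (simp_all add: ext_def)

text \<open>The basis index agreeing with i outside the register and with local index c on it.\<close>

definition replace_loc :: "nat \<Rightarrow> nat list \<Rightarrow> nat \<Rightarrow> nat \<Rightarrow> nat" where
  "replace_loc n qs i c = horner_sum of_bool 2
     (map (\<lambda>m. (\<exists>j<length qs. qs ! j = m \<and> bit c (length qs - 1 - j)) \<or> (m \<notin> set qs \<and> bit i m))
       [0..<n])"

lemma replace_loc_less: "replace_loc n qs i c < 2^n"
  unfolding replace_loc_def
  using horner_sum_bound[of "map (\<lambda>m. (\<exists>j<length qs. qs ! j = m \<and> bit c (length qs - 1 - j))
    \<or> (m \<notin> set qs \<and> bit i m)) [0..<n]"] by simp

lemma bit_replace_loc:
  "bit (replace_loc n qs i c) m \<longleftrightarrow>
     m < n \<and> ((\<exists>j<length qs. qs ! j = m \<and> bit c (length qs - 1 - j)) \<or> (m \<notin> set qs \<and> bit i m))"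
  unfolding replace_loc_def by (auto simp: bit_horner_sum_bit_iff)

lemma agree_outside_replace_loc: "agree_outside n qs i (replace_loc n qs i c)"
  using nth_mem by (fastforce simp: agree_outside_def bit_replace_loc)

lemma loc_replace_loc:
  assumes "wf_reg n qs" "c < 2 ^ length qs"
  shows "loc qs (replace_loc n qs i c) = c"
proof (rule eq_if_bits_eq_below[OF loc_less assms(2)])
  fix p assume p: "p < length qs"
  let ?m = "qs ! (length qs - 1 - p)"
  have "?m \<in> set qs" using p by simp
  then have m: "?m \<in> set qs" "?m < n" using assms(1) unfolding wf_reg_def by blast+
  have "(\<exists>j<length qs. qs ! j = ?m \<and> bit c (length qs - 1 - j)) \<longleftrightarrow> bit c p"
  proof
    assume "\<exists>j<length qs. qs ! j = ?m \<and> bit c (length qs - 1 - j)"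
    then obtain j where j: "j < length qs" "qs ! j = ?m" "bit c (length qs - 1 - j)" by blast
    with p assms(1) have "j = length qs - 1 - p" by (auto simp: wf_reg_def nth_eq_iff_index_eq)
    with j p show "bit c p" by simp
  next
    assume "bit c p"
    with p show "\<exists>j<length qs. qs ! j = ?m \<and> bit c (length qs - 1 - j)"
      by (intro exI[of _ "length qs - 1 - p"]) auto
  qed
  with p m show "bit (loc qs (replace_loc n qs i c)) p = bit c p"
    by (simp add: bit_loc bit_replace_loc)
qed

lemma loc_inj:
  assumes "wf_reg n qs" "k < 2^n" "k' < 2^n" "agree_outside n qs k k'" "loc qs k = loc qs k'"
  shows "k = k'"
proof (rule eq_if_bits_eq_below[OF assms(2,3)])
  fix m assume m: "m < n"
  show "bit k m = bit k' m"
  proof (cases "m \<in> set qs")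
    case True
    then obtain j where j: "j < length qs" "qs ! j = m" by (auto simp: in_set_conv_nth)
    have "bit (loc qs k) (length qs - 1 - j) = bit (loc qs k') (length qs - 1 - j)"
      using assms(5) by simp
    moreover have "length qs - 1 - (length qs - 1 - j) = j" "length qs - Suc j < length qs"
      using j by simp_all
    ultimately show ?thesis using j by (simp add: bit_loc)
  next
    case False
    with assms(4) m show ?thesis by (simp add: agree_outside_def)
  qed
qed

lemma loc_bij_betw:
  assumes "wf_reg n qs" "i < 2^n"
  shows "bij_betw (loc qs) {k. k < 2^n \<and> agree_outside n qs i k} {..<2 ^ length qs}"
proof (rule bij_betwI')
  fix x y assume x: "x \<in> {k. k < 2^n \<and> agree_outside n qs i k}"
    and y: "y \<in> {k. k < 2^n \<and> agree_outside n qs i k}"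
  then have "agree_outside n qs x y" by (blast intro: agree_outside_trans agree_outside_sym)
  with x y show "(loc qs x = loc qs y) = (x = y)" using loc_inj[OF assms(1), of x y] by auto
next
  fix c :: nat assume "c \<in> {..<2 ^ length qs}"
  then have "c = loc qs (replace_loc n qs i c)" using loc_replace_loc[OF assms(1)] by simp
  then show "\<exists>x\<in>{k. k < 2 ^ n \<and> agree_outside n qs i k}. c = loc qs x"
    using replace_loc_less agree_outside_replace_loc by blast
qed (simp add: loc_less)

lemma mult_mat_entry:
  assumes "A \<in> carrier_mat d m" "B \<in> carrier_mat m e" "i < d" "j < e"
  shows "(A * B) $$ (i,j) = (\<Sum>k<m. A $$ (i,k) * B $$ (k,j))"
  using assms by (auto simp: index_mult_mat(1) scalar_prod_def atLeast0LessThan intro!: sum.cong)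

lemma ext_mult:
  assumes wf: "wf_reg n qs" and A: "A \<in> carrier_mat (2 ^ length qs) (2 ^ length qs)"
    and B: "B \<in> carrier_mat (2 ^ length qs) (2 ^ length qs)"
  shows "ext n qs A * ext n qs B = ext n qs (A * B)"
proof (rule eq_matI)
  fix i j assume "i < dim_row (ext n qs (A * B))" "j < dim_col (ext n qs (A * B))"
  then have i: "i < 2^n" and j: "j < 2^n" by auto
  let ?K = "{k. k < 2^n \<and> agree_outside n qs i k}"
  let ?t = "\<lambda>k. A $$ (loc qs i, loc qs k) * B $$ (loc qs k, loc qs j)"
  have "(ext n qs A * ext n qs B) $$ (i,j) = (\<Sum>k<2^n. ext n qs A $$ (i,k) * ext n qs B $$ (k,j))"
    by (rule mult_mat_entry[OF ext_carrier ext_carrier i j])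
  also have "\<dots> = (\<Sum>k<2^n. if agree_outside n qs i k \<and> agree_outside n qs i j then ?t k else 0)"
  proof (intro sum.cong refl)
    fix k :: nat assume "k \<in> {..<2^n}"
    moreover have "agree_outside n qs i k \<and> agree_outside n qs k j
        \<longleftrightarrow> agree_outside n qs i k \<and> agree_outside n qs i j"
      by (meson agree_outside_trans agree_outside_sym)
    ultimately show "ext n qs A $$ (i,k) * ext n qs B $$ (k,j)
        = (if agree_outside n qs i k \<and> agree_outside n qs i j then ?t k else 0)"
      using i j by (auto simp: ext_entry)
  qed
  also have "\<dots> = (if agree_outside n qs i j then (\<Sum>k\<in>?K. ?t k) else 0)"
  proof -
    have "?K = {..<2^n} \<inter> {k. agree_outside n qs i k}" by auto
    then show ?thesis by (simp add: sum.inter_restrict)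
  qed
  also have "(\<Sum>k\<in>?K. ?t k) = (\<Sum>c<2 ^ length qs. A $$ (loc qs i, c) * B $$ (c, loc qs j))"
    using sum.reindex_bij_betw[OF loc_bij_betw[OF wf i]] by simp
  also have "\<dots> = (A * B) $$ (loc qs i, loc qs j)"
    using mult_mat_entry[OF A B loc_less loc_less] by simp
  finally show "(ext n qs A * ext n qs B) $$ (i,j) = ext n qs (A * B) $$ (i,j)"
    using i j by (simp add: ext_entry)
qed auto

lemma ext_one:
  assumes "wf_reg n qs"
  shows "ext n qs (1\<^sub>m (2 ^ length qs)) = 1\<^sub>m (2^n)"
proof (rule eq_matI)
  fix i j assume "i < dim_row (1\<^sub>m (2^n) :: complex mat)" "j < dim_col (1\<^sub>m (2^n) :: complex mat)"
  then have i: "i < 2^n" and j: "j < 2^n" by auto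
  then show "ext n qs (1\<^sub>m (2 ^ length qs)) $$ (i,j) = 1\<^sub>m (2^n) $$ (i,j)"
    using loc_less[of qs i] loc_less[of qs j] loc_inj[OF assms i j]
    by (auto simp: ext_entry agree_outside_refl)
qed auto

lemma ext_minus:
  assumes "A \<in> carrier_mat (2 ^ length qs) (2 ^ length qs)"
    and "B \<in> carrier_mat (2 ^ length qs) (2 ^ length qs)"
  shows "ext n qs (A - B) = ext n qs A - ext n qs B"
  by (rule eq_matI) (use assms loc_less in \<open>auto simp: ext_entry\<close>)

lemma adj_entry [simp]:
  "i < dim_col A \<Longrightarrow> j < dim_row A \<Longrightarrow> adj A $$ (i,j) = cnj (A $$ (j,i))"
  "dim_row (adj A) = dim_col A" "dim_col (adj A) = dim_row A"
  by (simp_all add: adj_def)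

lemma adj_carrier [simp]: "A \<in> carrier_mat a b \<Longrightarrow> adj A \<in> carrier_mat b a"
  by (simp add: adj_def)

lemma ext_adj:
  assumes "A \<in> carrier_mat (2 ^ length qs) (2 ^ length qs)"
  shows "adj (ext n qs A) = ext n qs (adj A)"
proof (rule eq_matI)
  fix i j assume "i < dim_row (ext n qs (adj A))" "j < dim_col (ext n qs (adj A))"
  then have "i < 2^n" "j < 2^n" by auto
  then show "adj (ext n qs A) $$ (i,j) = ext n qs (adj A) $$ (i,j)"
    using assms loc_less[of qs i] loc_less[of qs j]
      agree_outside_sym[of n qs i j] agree_outside_sym[of n qs j i]
    by (simp add: ext_entry)
qed auto

section \<open>Positive operators\<close>

definition quad_form :: "nat \<Rightarrow> complex mat \<Rightarrow> (nat \<Rightarrow> complex) \<Rightarrow> complex" where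
  "quad_form d A v = (\<Sum>i<d. \<Sum>j<d. cnj (v i) * A $$ (i,j) * v j)"

lemma positive_op_iff_quad_form:
  "positive_op d A \<longleftrightarrow>
     A \<in> carrier_mat d d \<and> (\<forall>v. Im (quad_form d A v) = 0 \<and> Re (quad_form d A v) \<ge> 0)"
  by (simp add: positive_op_def quad_form_def Let_def)

lemma positive_op_carrier: "positive_op d A \<Longrightarrow> A \<in> carrier_mat d d"
  by (simp add: positive_op_iff_quad_form)

lemma quad_form_supported:
  assumes "F \<subseteq> {..<d}" "\<And>k. k \<notin> F \<Longrightarrow> v k = 0"
  shows "quad_form d A v = (\<Sum>i\<in>F. \<Sum>j\<in>F. cnj (v i) * A $$ (i,j) * v j)"
proof -
  have inner: "(\<Sum>j<d. cnj (v i) * A $$ (i,j) * v j) = (\<Sum>j\<in>F. cnj (v i) * A $$ (i,j) * v j)" for i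
    by (rule sum.mono_neutral_right) (use assms in auto)
  have "quad_form d A v = (\<Sum>i\<in>F. \<Sum>j<d. cnj (v i) * A $$ (i,j) * v j)"
    unfolding quad_form_def by (rule sum.mono_neutral_right) (use assms in auto)
  with inner show ?thesis by simp
qed

lemma positive_op_diag:
  assumes "positive_op d A" "a < d"
  shows "Im (A $$ (a,a)) = 0" "Re (A $$ (a,a)) \<ge> 0"
proof -
  have "quad_form d A (\<lambda>k. of_bool (k = a)) = A $$ (a,a)"
    using assms(2) by (subst quad_form_supported[of "{a}"]) auto
  then show "Im (A $$ (a,a)) = 0" "Re (A $$ (a,a)) \<ge> 0"
    using assms(1) unfolding positive_op_iff_quad_form by (metis (no_types))+
qed

lemma mtrace_positive_op: "positive_op d A \<Longrightarrow> mtrace A = (\<Sum>i<d. A $$ (i,i))"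
  using positive_op_carrier[of d A] by (simp add: mtrace_def)

lemma positive_op_trace:
  assumes "positive_op d A"
  shows "Im (mtrace A) = 0" "Re (mtrace A) \<ge> 0"
  using positive_op_diag[OF assms]
  by (auto simp: mtrace_positive_op[OF assms] Im_sum Re_sum intro!: sum_nonneg)

lemma positive_op_diag_sum_le_trace:
  assumes "positive_op d A" "F \<subseteq> {..<d}"
  shows "(\<Sum>i\<in>F. Re (A $$ (i,i))) \<le> Re (mtrace A)"
proof -
  have "(\<Sum>i\<in>F. Re (A $$ (i,i))) \<le> (\<Sum>i<d. Re (A $$ (i,i)))"
    by (rule sum_mono2) (use assms positive_op_diag(2)[OF assms(1)] in auto)
  then show ?thesis by (simp add: mtrace_positive_op[OF assms(1)] Re_sum)
qed

text \<open>Testing positivity on the vectors e_a + c e_b for c = 1, -1, i, -i bounds the real and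
  imaginary parts of the off-diagonal entry by half the sum of the two diagonal entries.\<close>

lemma positive_op_entry_bound:
  assumes "positive_op d A" "a < d" "b < d"
  shows "cmod (A $$ (a,b)) \<le> Re (mtrace A)"
proof (cases "a = b")
  case True
  then show ?thesis
    using positive_op_diag[OF assms(1,2)] positive_op_diag_sum_le_trace[OF assms(1), of "{a}"] assms(2)
    by (simp add: cmod_eq_Re)
next
  case False
  let ?p = "A $$ (a,b)" and ?q = "A $$ (b,a)"
  let ?s = "Re (A $$ (a,a)) + Re (A $$ (b,b))"
  have ia: "Im (A $$ (a,a)) = 0" and ib: "Im (A $$ (b,b)) = 0"
    using positive_op_diag[OF assms(1)] assms by auto
  have test: "Im (A $$ (a,a) + ?p * c + cnj c * ?q + cnj c * A $$ (b,b) * c) = 0 \<and>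
              Re (A $$ (a,a) + ?p * c + cnj c * ?q + cnj c * A $$ (b,b) * c) \<ge> 0" for c
  proof -
    let ?v = "\<lambda>k. if k = a then 1 else if k = b then c else (0::complex)"
    have "quad_form d A ?v = (\<Sum>i\<in>{a,b}. \<Sum>j\<in>{a,b}. cnj (?v i) * A $$ (i,j) * ?v j)"
      by (rule quad_form_supported) (use assms in auto)
    also have "\<dots> = A $$ (a,a) + ?p * c + cnj c * ?q + cnj c * A $$ (b,b) * c"
      using False by (simp add: add.assoc)
    finally show ?thesis using assms(1) unfolding positive_op_iff_quad_form by (metis (no_types))
  qed
  have "Im ?p + Im ?q = 0" "Re ?p + Re ?q + ?s \<ge> 0" using test[of 1] ia ib by simp_all
  moreover have "?s - Re ?p - Re ?q \<ge> 0" using test[of "-1"] ia ib by simp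
  moreover have "Re ?p - Re ?q = 0" "?s - Im ?p + Im ?q \<ge> 0" using test[of \<i>] ia ib by simp_all
  moreover have "?s + Im ?p - Im ?q \<ge> 0" using test[of "-\<i>"] ia ib by simp
  ultimately have "\<bar>Re ?p\<bar> + \<bar>Im ?p\<bar> \<le> ?s" by linarith
  then have "cmod ?p \<le> ?s" using cmod_le[of ?p] by linarith
  also have "?s \<le> Re (mtrace A)"
    using positive_op_diag_sum_le_trace[OF assms(1), of "{a,b}"] assms False by simp
  finally show ?thesis .
qed

lemma positive_op_zero: "positive_op d (0\<^sub>m d d)"
  unfolding positive_op_iff_quad_form quad_form_def by auto

lemma positive_op_add:
  assumes A: "positive_op d A" and B: "positive_op d B"
  shows "positive_op d (A + B)"
proof -
  have cA: "A \<in> carrier_mat d d" and cB: "B \<in> carrier_mat d d" using A B positive_op_carrier by auto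
  then have "quad_form d (A + B) v = quad_form d A v + quad_form d B v" for v
    unfolding quad_form_def by (auto simp: algebra_simps sum.distrib[symmetric] intro!: sum.cong)
  with A B cA cB show ?thesis unfolding positive_op_iff_quad_form by auto
qed

lemma quad_form_conj:
  assumes X: "X \<in> carrier_mat d d" and R: "R \<in> carrier_mat d d"
  shows "quad_form d (X * R * adj X) v = quad_form d R (\<lambda>l. \<Sum>j<d. cnj (X $$ (j,l)) * v j)"
proof -
  let ?F = "\<lambda>i j k l. cnj (v i) * X $$ (i,k) * R $$ (k,l) * cnj (X $$ (j,l)) * v j"
  have entry: "(X * R * adj X) $$ (i,j) = (\<Sum>l<d. (\<Sum>k<d. X $$ (i,k) * R $$ (k,l)) * cnj (X $$ (j,l)))"
    if "i < d" "j < d" for i j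
    using that X R by (simp add: mult_mat_entry[of "X * R" d d "adj X" d] mult_mat_entry[OF X R])
  have "quad_form d (X * R * adj X) v = (\<Sum>i<d. \<Sum>j<d. \<Sum>l<d. \<Sum>k<d. ?F i j k l)"
    unfolding quad_form_def
    by (intro sum.cong refl) (simp add: entry sum_distrib_left sum_distrib_right mult_ac)
  also have "\<dots> = (\<Sum>i<d. \<Sum>l<d. \<Sum>j<d. \<Sum>k<d. ?F i j k l)"
    by (rule sum.cong[OF refl], rule sum.swap)
  also have "\<dots> = (\<Sum>i<d. \<Sum>l<d. \<Sum>k<d. \<Sum>j<d. ?F i j k l)"
    by (rule sum.cong[OF refl], rule sum.cong[OF refl], rule sum.swap)
  also have "\<dots> = (\<Sum>l<d. \<Sum>k<d. \<Sum>i<d. \<Sum>j<d. ?F i j k l)"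
    by (subst sum.swap) (rule sum.cong[OF refl], rule sum.swap)
  also have "\<dots> = (\<Sum>k<d. \<Sum>l<d. \<Sum>i<d. \<Sum>j<d. ?F i j k l)"
    by (rule sum.swap)
  also have "\<dots> = quad_form d R (\<lambda>l. \<Sum>j<d. cnj (X $$ (j,l)) * v j)"
    unfolding quad_form_def
    by (intro sum.cong refl) (simp add: sum_distrib_left sum_distrib_right mult_ac)
  finally show ?thesis .
qed

lemma positive_op_conj:
  assumes X: "X \<in> carrier_mat d d" and R: "positive_op d R"
  shows "positive_op d (X * R * adj X)"
proof -
  have cR: "R \<in> carrier_mat d d" using R positive_op_carrier by auto
  then have "X * R * adj X \<in> carrier_mat d d" using X by auto
  with R show ?thesis unfolding positive_op_iff_quad_form quad_form_conj[OF X cR] by auto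
qed

section \<open>Trace behaviour of the basic commands\<close>

lemma mtrace_mult_comm:
  assumes A: "A \<in> carrier_mat d m" and B: "B \<in> carrier_mat m d"
  shows "mtrace (A * B) = mtrace (B * A)"
proof -
  have "mtrace (A * B) = (\<Sum>i<d. \<Sum>k<m. A $$ (i,k) * B $$ (k,i))"
    unfolding mtrace_def using A B by (auto simp: mult_mat_entry[OF A B] intro!: sum.cong)
  also have "\<dots> = (\<Sum>k<m. \<Sum>i<d. B $$ (k,i) * A $$ (i,k))"
    by (subst sum.swap) (simp add: mult.commute)
  also have "\<dots> = mtrace (B * A)"
    unfolding mtrace_def using A B by (auto simp: mult_mat_entry[OF B A] intro!: sum.cong)
  finally show ?thesis .
qed

lemma mtrace_add:
  "A \<in> carrier_mat d d \<Longrightarrow> B \<in> carrier_mat d d \<Longrightarrow> mtrace (A + B) = mtrace A + mtrace B"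
  unfolding mtrace_def by (auto simp: sum.distrib[symmetric] intro!: sum.cong)

lemma mtrace_minus:
  "A \<in> carrier_mat d d \<Longrightarrow> B \<in> carrier_mat d d \<Longrightarrow> mtrace (A - B) = mtrace A - mtrace B"
  unfolding mtrace_def by (auto simp: sum_subtractf[symmetric] intro!: sum.cong)

lemma mtrace_zero [simp]: "mtrace (0\<^sub>m d d) = 0"
  by (simp add: mtrace_def)

lemma projector_carrier: "projector d P \<Longrightarrow> P \<in> carrier_mat d d"
  by (simp add: projector_def)

lemma projector_complement:
  assumes "projector d P"
  shows "projector d (1\<^sub>m d - P)"
proof -
  have cP: "P \<in> carrier_mat d d" and PP: "P * P = P" and aP: "adj P = P"
    using assms by (auto simp: projector_def)
  have one: "(1\<^sub>m d :: complex mat) \<in> carrier_mat d d" and c: "1\<^sub>m d - P \<in> carrier_mat d d"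
    using cP by auto
  have "(1\<^sub>m d - P) * (1\<^sub>m d - P) = (1\<^sub>m d - P) * 1\<^sub>m d - (1\<^sub>m d - P) * P"
    by (rule mult_minus_distrib_mat[OF c one cP])
  also have "(1\<^sub>m d - P) * P = 1\<^sub>m d * P - P * P"
    by (rule minus_mult_distrib_mat[OF one cP cP])
  also have "(1\<^sub>m d - P) * 1\<^sub>m d - (1\<^sub>m d * P - P * P) = 1\<^sub>m d - P"
    using PP cP by (intro eq_matI) auto
  finally have sq: "(1\<^sub>m d - P) * (1\<^sub>m d - P) = 1\<^sub>m d - P" .
  have "cnj (P $$ (j,i)) = P $$ (i,j)" if "i < d" "j < d" for i j
    using that cP adj_entry(1)[of i P j] by (simp add: aP)
  then have "adj (1\<^sub>m d - P) = 1\<^sub>m d - P"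
    using cP by (intro eq_matI) auto
  with sq cP show ?thesis by (simp add: projector_def)
qed

lemma projector_perp: "projector (2 ^ length qs) P \<Longrightarrow> projector (2 ^ length qs) (perp qs P)"
  unfolding perp_def by (rule projector_complement)

lemma ext_projector:
  assumes "wf_reg n qs" "projector (2 ^ length qs) P"
  shows "projector (2^n) (ext n qs P)"
  using assms(2) ext_mult[OF assms(1)] ext_adj unfolding projector_def by simp

lemma ext_perp:
  assumes "wf_reg n qs" "P \<in> carrier_mat (2 ^ length qs) (2 ^ length qs)"
  shows "ext n qs (perp qs P) = 1\<^sub>m (2^n) - ext n qs P"
  using assms ext_one ext_minus[of "1\<^sub>m (2 ^ length qs)" qs P n] by (simp add: perp_def)

lemma mtrace_projector_sandwich:
  assumes X: "projector d X" and R: "R \<in> carrier_mat d d"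
  shows "mtrace (X * R * X) = mtrace (X * R)"
proof -
  have cX: "X \<in> carrier_mat d d" and XX: "X * X = X" using X by (auto simp: projector_def)
  have "mtrace (X * R * X) = mtrace (X * (X * R))"
    by (rule mtrace_mult_comm) (use cX R in auto)
  also have "X * (X * R) = X * R" using cX R XX by (simp add: assoc_mult_mat[symmetric])
  finally show ?thesis .
qed

lemma mtrace_projector_split:
  assumes X: "projector d X" and R: "R \<in> carrier_mat d d"
  shows "mtrace (X * R * X) + mtrace ((1\<^sub>m d - X) * R * (1\<^sub>m d - X)) = mtrace R"
proof -
  have cX: "X \<in> carrier_mat d d" using X by (rule projector_carrier)
  have "(1\<^sub>m d - X) * R = 1\<^sub>m d * R - X * R"
    by (rule minus_mult_distrib_mat) (use cX R in auto)
  then have "(1\<^sub>m d - X) * R = R - X * R" using R by simp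
  then have "mtrace ((1\<^sub>m d - X) * R * (1\<^sub>m d - X)) = mtrace R - mtrace (X * R)"
    using mtrace_projector_sandwich[OF projector_complement[OF X] R] mtrace_minus cX R by simp
  then show ?thesis by (simp add: mtrace_projector_sandwich[OF X R])
qed

lemma assert_op_positive_and_trace:
  assumes wf: "wf_reg n qs" and P: "projector (2 ^ length qs) P" and R: "positive_op (2^n) R"
  shows "positive_op (2^n) (assert_op n qs P R)"
    and "positive_op (2^n) (assert_op n qs (perp qs P) R)"
    and "Re (mtrace (assert_op n qs P R)) + Re (mtrace (assert_op n qs (perp qs P) R)) = Re (mtrace R)"
proof -
  have cP: "P \<in> carrier_mat (2 ^ length qs) (2 ^ length qs)" using P by (rule projector_carrier)
  have X: "projector (2^n) (ext n qs P)" by (rule ext_projector[OF wf P])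
  have Y: "projector (2^n) (ext n qs (perp qs P))"
    unfolding ext_perp[OF wf cP] by (rule projector_complement[OF X])
  have sandwich: "Z * R * Z = Z * R * adj Z" if "projector (2^n) Z" for Z
    using that by (simp add: projector_def)
  show "positive_op (2^n) (assert_op n qs P R)" "positive_op (2^n) (assert_op n qs (perp qs P) R)"
    unfolding assert_op_def sandwich[OF X] sandwich[OF Y]
    by (rule positive_op_conj[OF _ R], simp)+
  have "mtrace (assert_op n qs P R) + mtrace (assert_op n qs (perp qs P) R) = mtrace R"
    unfolding assert_op_def ext_perp[OF wf cP]
    by (rule mtrace_projector_split[OF X positive_op_carrier[OF R]])
  then show "Re (mtrace (assert_op n qs P R)) + Re (mtrace (assert_op n qs (perp qs P) R)) = Re (mtrace R)"
    by (metis plus_complex.sel(1))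
qed

lemma unit_positive_and_trace:
  assumes wf: "wf_reg n qs" and U: "unitary_op (2 ^ length qs) U" and R: "positive_op (2^n) R"
  shows "positive_op (2^n) (ext n qs U * R * adj (ext n qs U))"
    and "mtrace (ext n qs U * R * adj (ext n qs U)) = mtrace R"
proof -
  have cU: "U \<in> carrier_mat (2 ^ length qs) (2 ^ length qs)" and UU: "adj U * U = 1\<^sub>m (2 ^ length qs)"
    using U by (auto simp: unitary_op_def)
  have cR: "R \<in> carrier_mat (2^n) (2^n)" by (rule positive_op_carrier[OF R])
  show "positive_op (2^n) (ext n qs U * R * adj (ext n qs U))" by (rule positive_op_conj[OF ext_carrier R])
  have X: "adj (ext n qs U) * ext n qs U = 1\<^sub>m (2^n)"
    unfolding ext_adj[OF cU] ext_mult[OF wf adj_carrier[OF cU] cU] UU ext_one[OF wf] ..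
  have "mtrace (ext n qs U * R * adj (ext n qs U)) = mtrace (adj (ext n qs U) * (ext n qs U * R))"
    by (rule mtrace_mult_comm) (use cR in auto)
  also have "adj (ext n qs U) * (ext n qs U * R) = R"
    using cR X by (simp add: assoc_mult_mat[symmetric, of _ "2^n" "2^n" _ "2^n" _ "2^n"])
  finally show "mtrace (ext n qs U * R * adj (ext n qs U)) = mtrace R" .
qed

lemma positive_op_kraus_sum:
  assumes "\<forall>i\<in>set xs. K i \<in> carrier_mat d d" and R: "positive_op d R"
  shows "positive_op d (foldr (\<lambda>i M. K i * R * adj (K i) + M) xs (0\<^sub>m d d)) \<and>
    mtrace (foldr (\<lambda>i M. K i * R * adj (K i) + M) xs (0\<^sub>m d d)) = (\<Sum>i\<leftarrow>xs. mtrace (K i * R * adj (K i)))"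
  using assms(1)
proof (induction xs)
  case (Cons a xs)
  let ?F = "foldr (\<lambda>i M. K i * R * adj (K i) + M) xs (0\<^sub>m d d)"
  have Ka: "positive_op d (K a * R * adj (K a))" using Cons.prems R by (simp add: positive_op_conj)
  with Cons show ?case
    using positive_op_add[OF Ka] mtrace_add[OF positive_op_carrier[OF Ka] positive_op_carrier[of d ?F]]
    by simp
qed (simp add: positive_op_zero)

lemma ket0bra_adj_mult_entry:
  assumes "c < 2 ^ length qs" "a < 2 ^ length qs" "b < 2 ^ length qs"
  shows "(adj (ket0bra qs c) * ket0bra qs c) $$ (a,b) = of_bool (a = c \<and> b = c)"
proof -
  have ck: "ket0bra qs c \<in> carrier_mat (2 ^ length qs) (2 ^ length qs)" by (simp add: ket0bra_def)
  have "(adj (ket0bra qs c) * ket0bra qs c) $$ (a,b)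
      = (\<Sum>m<2 ^ length qs. adj (ket0bra qs c) $$ (a,m) * ket0bra qs c $$ (m,b))"
    by (rule mult_mat_entry[OF adj_carrier[OF ck] ck assms(2,3)])
  also have "\<dots> = (\<Sum>m<2 ^ length qs. if m = (0::nat) then of_bool (a = c \<and> b = c) else 0)"
    using assms by (intro sum.cong refl) (auto simp: ket0bra_def)
  finally show ?thesis by simp
qed

text \<open>The Kraus operator |0><c| on the register keeps exactly the diagonal entries of R
  whose register part is c.\<close>

lemma mtrace_init_term:
  assumes wf: "wf_reg n qs" and c: "c < 2 ^ length qs" and R: "R \<in> carrier_mat (2^n) (2^n)"
  shows "mtrace (ext n qs (ket0bra qs c) * R * adj (ext n qs (ket0bra qs c)))
       = (\<Sum>i<2^n. if loc qs i = c then R $$ (i,i) else 0)"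
proof -
  let ?K = "ext n qs (ket0bra qs c)" and ?E = "adj (ket0bra qs c) * ket0bra qs c"
  have ck: "ket0bra qs c \<in> carrier_mat (2 ^ length qs) (2 ^ length qs)" by (simp add: ket0bra_def)
  have "mtrace (?K * R * adj ?K) = mtrace (adj ?K * (?K * R))"
    by (rule mtrace_mult_comm) (use R in auto)
  also have "adj ?K * (?K * R) = (adj ?K * ?K) * R"
    using R by (simp add: assoc_mult_mat[symmetric, of _ "2^n" "2^n" _ "2^n" _ "2^n"])
  also have "adj ?K * ?K = ext n qs ?E"
    unfolding ext_adj[OF ck] by (rule ext_mult[OF wf adj_carrier[OF ck] ck])
  also have "mtrace (ext n qs ?E * R) = (\<Sum>i<2^n. \<Sum>k<2^n. ext n qs ?E $$ (i,k) * R $$ (k,i))"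
    unfolding mtrace_def using R by (auto simp: mult_mat_entry[OF ext_carrier R] intro!: sum.cong)
  also have "\<dots> = (\<Sum>i<2^n. \<Sum>k<2^n. if k = i then (if loc qs i = c then R $$ (i,i) else 0) else 0)"
  proof (intro sum.cong refl)
    fix i k assume "i \<in> {..<2^n::nat}" "k \<in> {..<2^n::nat}"
    then have i: "i < 2^n" and k: "k < 2^n" by auto
    have "ext n qs ?E $$ (i,k) = of_bool (agree_outside n qs i k \<and> loc qs i = c \<and> loc qs k = c)"
      using i k loc_less by (simp add: ext_entry ket0bra_adj_mult_entry[OF c])
    moreover have "agree_outside n qs i k \<and> loc qs i = c \<and> loc qs k = c \<longleftrightarrow> k = i \<and> loc qs i = c"
      using loc_inj[OF wf i k] agree_outside_refl by auto
    ultimately show "ext n qs ?E $$ (i,k) * R $$ (k,i)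
        = (if k = i then (if loc qs i = c then R $$ (i,i) else 0) else 0)"
      by auto
  qed
  finally show ?thesis by simp
qed

lemma init_positive_and_trace:
  assumes wf: "wf_reg n qs" and R: "positive_op (2^n) R"
  shows "positive_op (2^n) (sem n (Init qs) R)" and "mtrace (sem n (Init qs) R) = mtrace R"
proof -
  have cR: "R \<in> carrier_mat (2^n) (2^n)" by (rule positive_op_carrier[OF R])
  note kraus = positive_op_kraus_sum[of "[0..<2 ^ length qs]" "\<lambda>i. ext n qs (ket0bra qs i)", OF _ R]
  show "positive_op (2^n) (sem n (Init qs) R)" using kraus by simp
  have "mtrace (sem n (Init qs) R)
      = (\<Sum>c<2 ^ length qs. mtrace (ext n qs (ket0bra qs c) * R * adj (ext n qs (ket0bra qs c))))"
    using kraus by (simp add: sum_set_upt_conv_sum_list_nat[symmetric] atLeast0LessThan)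
  also have "\<dots> = (\<Sum>c<2 ^ length qs. \<Sum>i<2^n. if loc qs i = c then R $$ (i,i) else 0)"
    by (intro sum.cong refl, rule mtrace_init_term[OF wf _ cR]) auto
  also have "\<dots> = (\<Sum>i<2^n. R $$ (i,i))"
    by (subst sum.swap) (simp add: loc_less)
  also have "\<dots> = mtrace R" using cR by (simp add: mtrace_def)
  finally show "mtrace (sem n (Init qs) R) = mtrace R" .
qed

section \<open>Programs map partial density operators to partial density operators\<close>

definition trace_nonincreasing :: "nat \<Rightarrow> (complex mat \<Rightarrow> complex mat) \<Rightarrow> bool" where
  "trace_nonincreasing d f \<longleftrightarrow>
     (\<forall>\<rho>. positive_op d \<rho> \<longrightarrow> positive_op d (f \<rho>) \<and> Re (mtrace (f \<rho>)) \<le> Re (mtrace \<rho>))"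

lemma positive_op_msuminf:
  assumes pT: "\<And>k. positive_op d (T k)" and summable: "\<And>a b. a < d \<Longrightarrow> b < d \<Longrightarrow> summable (\<lambda>k. T k $$ (a,b))"
  shows "positive_op d (msuminf d T)" and "(\<lambda>k. mtrace (T k)) sums mtrace (msuminf d T)"
proof -
  let ?M = "msuminf d T"
  have sums_entry: "(\<lambda>k. T k $$ (a,b)) sums (?M $$ (a,b))" if "a < d" "b < d" for a b
    using summable_sums[OF summable[OF that]] that by (simp add: msuminf_def)
  have "Im (quad_form d ?M v) = 0 \<and> Re (quad_form d ?M v) \<ge> 0" for v
  proof -
    have "(\<lambda>k. quad_form d (T k) v) sums quad_form d ?M v"
      unfolding quad_form_def by (intro sums_sum sums_mult2 sums_mult sums_entry) auto
    then have "(\<lambda>k. Im (quad_form d (T k) v)) sums Im (quad_form d ?M v)"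
      and "(\<lambda>k. Re (quad_form d (T k) v)) sums Re (quad_form d ?M v)"
      by (simp_all add: sums_complex_iff)
    moreover have "Im (quad_form d (T k) v) = 0" "Re (quad_form d (T k) v) \<ge> 0" for k
      using pT unfolding positive_op_iff_quad_form by auto
    ultimately show ?thesis
      using suminf_nonneg[of "\<lambda>k. Re (quad_form d (T k) v)"] by (auto simp: sums_iff)
  qed
  then show pM: "positive_op d ?M" unfolding positive_op_iff_quad_form by (simp add: msuminf_def)
  show "(\<lambda>k. mtrace (T k)) sums mtrace ?M"
    unfolding mtrace_positive_op[OF pM] mtrace_positive_op[OF pT] by (intro sums_sum sums_entry) auto
qed

text \<open>The traces of the summands telescope against the trace of R, so they are summable;
  entrywise summability follows from the entry bound for positive operators.\<close>

lemma loop_series: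
  fixes g f :: "complex mat \<Rightarrow> complex mat"
  assumes R: "positive_op d R"
    and step: "\<And>\<sigma>. positive_op d \<sigma> \<Longrightarrow> positive_op d (g \<sigma>) \<and> positive_op d (f \<sigma>) \<and>
                 Re (mtrace (g \<sigma>)) + Re (mtrace (f \<sigma>)) \<le> Re (mtrace \<sigma>)"
  shows "\<forall>a<d. \<forall>b<d. summable (\<lambda>k. f ((g ^^ k) R) $$ (a,b))"
    and "positive_op d (msuminf d (\<lambda>k. f ((g ^^ k) R)))"
    and "Re (mtrace (msuminf d (\<lambda>k. f ((g ^^ k) R)))) \<le> Re (mtrace R)"
proof -
  define T where "T = (\<lambda>k. f ((g ^^ k) R))"
  have pg: "positive_op d ((g ^^ k) R)" for k
    by (induction k) (use R step in auto)
  have pT: "positive_op d (T k)" for k using step[OF pg[of k]] by (simp add: T_def)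
  have partial: "(\<Sum>k<N. Re (mtrace (T k))) + Re (mtrace ((g ^^ N) R)) \<le> Re (mtrace R)" for N
  proof (induction N)
    case (Suc N)
    then show ?case using step[OF pg[of N]] by (simp add: T_def)
  qed simp
  have bound: "(\<Sum>k<N. Re (mtrace (T k))) \<le> Re (mtrace R)" for N
    using partial[of N] positive_op_trace(2)[OF pg[of N]] by linarith
  have summable_trace: "summable (\<lambda>k. Re (mtrace (T k)))"
    by (rule summableI_nonneg_bounded[OF positive_op_trace(2)[OF pT] bound])
  have summable_entry: "summable (\<lambda>k. T k $$ (a,b))" if "a < d" "b < d" for a b
    by (rule summable_comparison_test'[OF summable_trace, of 0])
      (use positive_op_entry_bound[OF pT that] in auto)
  note limit = positive_op_msuminf[OF pT summable_entry]
  have "Re (mtrace (msuminf d T)) = (\<Sum>k. Re (mtrace (T k)))"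
    using limit(2) by (simp add: sums_complex_iff sums_iff)
  also have "\<dots> \<le> Re (mtrace R)" by (rule suminf_le_const[OF summable_trace bound])
  finally show "Re (mtrace (msuminf d (\<lambda>k. f ((g ^^ k) R)))) \<le> Re (mtrace R)"
    by (simp add: T_def)
  show "\<forall>a<d. \<forall>b<d. summable (\<lambda>k. f ((g ^^ k) R) $$ (a,b))"
    using summable_entry by (simp add: T_def)
  show "positive_op d (msuminf d (\<lambda>k. f ((g ^^ k) R)))"
    using limit(1) by (simp add: T_def)
qed

lemma assert_then_trace_nonincreasing:
  assumes "wf_reg n qs" "projector (2 ^ length qs) P" "trace_nonincreasing (2^n) g"
    and "positive_op (2^n) \<sigma>"
  shows "positive_op (2^n) (g (assert_op n qs P \<sigma>)) \<and> positive_op (2^n) (assert_op n qs (perp qs P) \<sigma>) \<and>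
    Re (mtrace (g (assert_op n qs P \<sigma>))) + Re (mtrace (assert_op n qs (perp qs P) \<sigma>)) \<le> Re (mtrace \<sigma>)"
  using assert_op_positive_and_trace[OF assms(1,2,4)] assms(3)
  unfolding trace_nonincreasing_def by force

lemma trace_nonincreasing_measurement:
  assumes wf: "wf_reg n qs" "projector (2 ^ length qs) P"
    and g1: "trace_nonincreasing (2^n) g1" and g0: "trace_nonincreasing (2^n) g0"
  shows "trace_nonincreasing (2^n) (\<lambda>\<rho>. g1 (assert_op n qs P \<rho>) + g0 (assert_op n qs (perp qs P) \<rho>))"
  unfolding trace_nonincreasing_def
proof (intro allI impI)
  fix \<rho> assume \<rho>: "positive_op (2^n) \<rho>"
  let ?\<rho>1 = "g1 (assert_op n qs P \<rho>)" and ?\<rho>0 = "g0 (assert_op n qs (perp qs P) \<rho>)"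
  note branches = assert_op_positive_and_trace[OF wf \<rho>]
  have "positive_op (2^n) ?\<rho>1 \<and> Re (mtrace ?\<rho>1) \<le> Re (mtrace (assert_op n qs P \<rho>))"
    "positive_op (2^n) ?\<rho>0 \<and> Re (mtrace ?\<rho>0) \<le> Re (mtrace (assert_op n qs (perp qs P) \<rho>))"
    using g1 g0 branches(1,2) by (auto simp: trace_nonincreasing_def)
  moreover from this have "mtrace (?\<rho>1 + ?\<rho>0) = mtrace ?\<rho>1 + mtrace ?\<rho>0"
    by (intro mtrace_add positive_op_carrier) auto
  ultimately show "positive_op (2^n) (?\<rho>1 + ?\<rho>0) \<and> Re (mtrace (?\<rho>1 + ?\<rho>0)) \<le> Re (mtrace \<rho>)"
    using positive_op_add branches(3) by simp
qed

lemma sem_trace_nonincreasing: "wf_prog n S \<Longrightarrow> trace_nonincreasing (2^n) (sem n S)"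
proof (induction S)
  case (Init qs)
  then show ?case using init_positive_and_trace[of n qs] by (simp add: trace_nonincreasing_def)
next
  case (Unit qs U)
  then show ?case using unit_positive_and_trace[of n qs U] by (simp add: trace_nonincreasing_def)
next
  case (Assert qs P)
  then show ?case
    using assert_op_positive_and_trace[of n qs P] positive_op_trace(2)
    by (fastforce simp: trace_nonincreasing_def)
next
  case (Seq S0 S1)
  then show ?case unfolding trace_nonincreasing_def by (metis order_trans sem.simps(5) wf_prog.simps(5))
next
  case (If qs P S1 S0)
  then show ?case
    using trace_nonincreasing_measurement[of n qs P "sem n S1" "sem n S0"]
    by (simp add: trace_nonincreasing_def)
next
  case (While qs P S)
  then show ?case
    using loop_series(2,3)[OF _ assert_then_trace_nonincreasing[of n qs P "sem n S"]]
    by (simp add: trace_nonincreasing_def)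
qed (simp add: trace_nonincreasing_def)

lemma sem_Dens: "wf_prog n S \<Longrightarrow> \<rho> \<in> Dens n \<Longrightarrow> sem n S \<rho> \<in> Dens n"
  using sem_trace_nonincreasing[of n S] by (force simp: Dens_def trace_nonincreasing_def)

lemma sem_Seq_eq_comp: "sem n (Seq S0 S1) = sem n S1 \<circ> sem n S0"
  by (rule ext) simp

lemma sem_If_eq:
  "sem n (If qs P S1 S0) = (\<lambda>\<rho>. sem n (Seq (Assert qs P) S1) \<rho> + sem n (Seq (Assert qs (perp qs P)) S0) \<rho>)"
  by (rule ext) simp

lemma sem_While_eq:
  "sem n (While qs P S) =
     (\<lambda>\<rho>. msuminf (2^n) (\<lambda>i. (sem n (Assert qs (perp qs P)) \<circ> (sem n (Seq (Assert qs P) S) ^^ i)) \<rho>))"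
proof -
  have "(\<lambda>\<sigma>. sem n S (assert_op n qs P \<sigma>)) = sem n (Seq (Assert qs P) S)" by (rule ext) simp
  then show ?thesis by (intro ext) simp
qed

lemma while_series_Dens:
  assumes "wf_prog n (While qs P S)"
  shows "\<forall>\<rho>\<in>Dens n.
    (\<forall>a<2^n. \<forall>b<2^n. summable (\<lambda>i. (sem n (Assert qs (perp qs P)) \<circ> (sem n (Seq (Assert qs P) S) ^^ i)) \<rho> $$ (a,b))) \<and>
    msuminf (2^n) (\<lambda>i. (sem n (Assert qs (perp qs P)) \<circ> (sem n (Seq (Assert qs P) S) ^^ i)) \<rho>) \<in> Dens n"
proof -
  have "sem n (Seq (Assert qs P) S) = (\<lambda>\<sigma>. sem n S (assert_op n qs P \<sigma>))" by (rule ext) simp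
  then show ?thesis
    using assms sem_Dens[OF assms] sem_While_eq[of n qs P S] sem_trace_nonincreasing[of n S]
      loop_series(1)[OF _ assert_then_trace_nonincreasing[of n qs P "sem n S"]]
    by (simp add: Dens_def)
qed

section \<open>Abstraction of program semantics\<close>

text \<open>Under a Galois embedding this says exactly that \<alpha> (f ` R) is a function of \<alpha> R,
  namely of the best abstraction of f (see \<open>alpha_congruent_image_eq\<close>).\<close>

definition alpha_congruent ::
  "nat \<Rightarrow> (complex mat set \<Rightarrow> 'a) \<Rightarrow> (complex mat \<Rightarrow> complex mat) \<Rightarrow> bool" where
  "alpha_congruent n \<alpha> f \<longleftrightarrow> (\<forall>\<rho>\<in>Dens n. f \<rho> \<in> Dens n) \<and>
     (\<forall>R1 R2. R1 \<subseteq> Dens n \<longrightarrow> R2 \<subseteq> Dens n \<longrightarrow> \<alpha> R1 = \<alpha> R2 \<longrightarrow> \<alpha> (f ` R1) = \<alpha> (f ` R2))"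

lemma alpha_congruent_image_Dens: "alpha_congruent n \<alpha> f \<Longrightarrow> R \<subseteq> Dens n \<Longrightarrow> f ` R \<subseteq> Dens n"
  by (auto simp: alpha_congruent_def)

lemma alpha_congruent_comp:
  assumes "alpha_congruent n \<alpha> f" "alpha_congruent n \<alpha> g"
  shows "alpha_congruent n \<alpha> (g \<circ> f)"
  unfolding alpha_congruent_def
proof (intro conjI allI impI)
  fix R1 R2 assume R: "R1 \<subseteq> Dens n" "R2 \<subseteq> Dens n" "\<alpha> R1 = \<alpha> R2"
  then have "f ` R1 \<subseteq> Dens n" "f ` R2 \<subseteq> Dens n" "\<alpha> (f ` R1) = \<alpha> (f ` R2)"
    using assms(1) unfolding alpha_congruent_def by blast+
  then show "\<alpha> ((g \<circ> f) ` R1) = \<alpha> ((g \<circ> f) ` R2)"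
    using assms(2) unfolding alpha_congruent_def image_comp[symmetric] by blast
qed (use assms in \<open>auto simp: alpha_congruent_def\<close>)

lemma alpha_congruent_funpow:
  assumes "alpha_congruent n \<alpha> g"
  shows "alpha_congruent n \<alpha> (g ^^ i)"
proof (induction i)
  case 0
  show ?case by (simp add: alpha_congruent_def)
next
  case (Suc i)
  then show ?case using alpha_congruent_comp[OF Suc.IH assms] by (simp add: comp_def)
qed

context
  fixes n :: nat and \<alpha> :: "complex mat set \<Rightarrow> 'a::complete_lattice" and \<gamma> :: "'a \<Rightarrow> complex mat set"
  assumes WS: "well_structured n \<alpha> \<gamma>"
begin

lemma gamma_subset_Dens: "\<gamma> a \<subseteq> Dens n"
  using WS by (simp add: well_structured_def)

lemma alpha_mono: "R1 \<subseteq> R2 \<Longrightarrow> R2 \<subseteq> Dens n \<Longrightarrow> \<alpha> R1 \<le> \<alpha> R2"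
  using WS by (simp add: well_structured_def)

lemma gamma_mono: "a \<le> b \<Longrightarrow> \<gamma> a \<subseteq> \<gamma> b"
  using WS by (simp add: well_structured_def mono_def)

lemma subset_gamma_iff: "R \<subseteq> Dens n \<Longrightarrow> R \<subseteq> \<gamma> a \<longleftrightarrow> \<alpha> R \<le> a"
  using WS by (simp add: well_structured_def)

lemma alpha_gamma [simp]: "\<alpha> (\<gamma> a) = a"
  using WS by (simp add: well_structured_def)

lemma alpha_msuminf:
  assumes "I \<noteq> {}" "\<forall>i\<in>I. \<rho> i \<in> Dens n \<and> x i > 0"
    "\<forall>a<2^n. \<forall>b<2^n. summable (\<lambda>i. if i \<in> I then complex_of_real (x i) * \<rho> i $$ (a,b) else 0)"
    "msuminf (2^n) (\<lambda>i. if i \<in> I then complex_of_real (x i) \<cdot>\<^sub>m \<rho> i else 0\<^sub>m (2^n) (2^n)) \<in> Dens n"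
  shows "\<alpha> {msuminf (2^n) (\<lambda>i. if i \<in> I then complex_of_real (x i) \<cdot>\<^sub>m \<rho> i else 0\<^sub>m (2^n) (2^n))}
    = (SUP i\<in>I. \<alpha> {\<rho> i})"
  using WS assms unfolding well_structured_def by blast

lemma alpha_UN:
  assumes "\<And>i. i \<in> I \<Longrightarrow> R i \<subseteq> Dens n"
  shows "\<alpha> (\<Union>i\<in>I. R i) = (SUP i\<in>I. \<alpha> (R i))"
proof (rule order.antisym)
  have U: "(\<Union>i\<in>I. R i) \<subseteq> Dens n" using assms by auto
  have "R i \<subseteq> \<gamma> (SUP i\<in>I. \<alpha> (R i))" if "i \<in> I" for i
    by (subst subset_gamma_iff[OF assms[OF that]]) (rule SUP_upper[OF that])
  then have "(\<Union>i\<in>I. R i) \<subseteq> \<gamma> (SUP i\<in>I. \<alpha> (R i))" by auto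
  then show "\<alpha> (\<Union>i\<in>I. R i) \<le> (SUP i\<in>I. \<alpha> (R i))" using subset_gamma_iff[OF U] by simp
  show "(SUP i\<in>I. \<alpha> (R i)) \<le> \<alpha> (\<Union>i\<in>I. R i)"
    by (rule SUP_least, rule alpha_mono[OF _ U]) blast
qed

lemma alpha_image_eq_SUP:
  assumes "f ` R \<subseteq> Dens n"
  shows "\<alpha> (f ` R) = (SUP \<rho>\<in>R. \<alpha> {f \<rho>})"
proof -
  have "\<alpha> (\<Union>\<rho>\<in>R. {f \<rho>}) = (SUP \<rho>\<in>R. \<alpha> {f \<rho>})"
    by (rule alpha_UN) (use assms in blast)
  then show ?thesis by (simp add: UNION_singleton_eq_range)
qed

lemma alpha_congruent_image_eq:
  assumes "alpha_congruent n \<alpha> f" "R \<subseteq> Dens n"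
  shows "\<alpha> (f ` R) = \<alpha> (f ` \<gamma> (\<alpha> R))"
proof -
  have "\<forall>R'. R' \<subseteq> Dens n \<longrightarrow> \<alpha> R = \<alpha> R' \<longrightarrow> \<alpha> (f ` R) = \<alpha> (f ` R')"
    using assms unfolding alpha_congruent_def by blast
  then show ?thesis using gamma_subset_Dens alpha_gamma by presburger
qed

lemma alpha_add:
  assumes A: "A \<in> Dens n" and B: "B \<in> Dens n" and AB: "A + B \<in> Dens n"
  shows "\<alpha> {A + B} = sup (\<alpha> {A}) (\<alpha> {B})"
proof -
  define r where "r i = (if i = 0 then A else B)" for i :: nat
  let ?sum = "msuminf (2^n) (\<lambda>i. if i \<in> {0,1} then complex_of_real 1 \<cdot>\<^sub>m r i else 0\<^sub>m (2^n) (2^n))"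
  have cA: "A \<in> carrier_mat (2^n) (2^n)" and cB: "B \<in> carrier_mat (2^n) (2^n)"
    using A B by (auto simp: Dens_def dest: positive_op_carrier)
  have "?sum = A + B"
  proof (rule eq_matI)
    fix a b assume "a < dim_row (A + B)" "b < dim_col (A + B)"
    then have ab: "a < 2^n" "b < 2^n" using cB by auto
    then have "?sum $$ (a,b) = (\<Sum>k. (if k \<in> {0,1} then complex_of_real 1 \<cdot>\<^sub>m r k else 0\<^sub>m (2^n) (2^n)) $$ (a,b))"
      by (simp add: msuminf_def)
    also have "\<dots> = (\<Sum>k\<in>{0,1}. (if k \<in> {0,1} then complex_of_real 1 \<cdot>\<^sub>m r k else 0\<^sub>m (2^n) (2^n)) $$ (a,b))"
      by (rule suminf_finite) (use ab in auto)
    also have "\<dots> = (A + B) $$ (a,b)" using ab cA cB by (simp add: r_def)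
    finally show "?sum $$ (a,b) = (A + B) $$ (a,b)" .
  qed (use cB in \<open>auto simp: msuminf_def\<close>)
  moreover have "\<alpha> {?sum} = (SUP i\<in>{0,1}. \<alpha> {r i})"
    by (rule alpha_msuminf)
      (use A B AB \<open>?sum = A + B\<close> in \<open>auto simp: r_def intro!: summable_finite[of "{0,1}"]\<close>)
  ultimately show ?thesis by (simp add: r_def)
qed

lemma alpha_msuminf_seq:
  assumes D: "\<forall>i. r i \<in> Dens n"
    and summable: "\<forall>a<2^n. \<forall>b<2^n. summable (\<lambda>i. r i $$ (a,b))"
    and M: "msuminf (2^n) r \<in> Dens n"
  shows "\<alpha> {msuminf (2^n) r} = (SUP i. \<alpha> {r i})"
proof -
  have c: "r k \<in> carrier_mat (2^n) (2^n)" for k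
    using D by (auto simp: Dens_def dest: positive_op_carrier)
  have "(1 \<cdot>\<^sub>m r k) $$ (i,j) = r k $$ (i,j)" if "i < 2^n" "j < 2^n" for k i j
    using that c[of k] by (metis carrier_matD index_smult_mat(1) mult_1)
  then have eq: "msuminf (2^n) (\<lambda>i. if i \<in> UNIV then complex_of_real 1 \<cdot>\<^sub>m r i else 0\<^sub>m (2^n) (2^n))
      = msuminf (2^n) r"
    unfolding msuminf_def by (intro eq_matI) auto
  have "\<alpha> {msuminf (2^n) (\<lambda>i. if i \<in> UNIV then complex_of_real 1 \<cdot>\<^sub>m r i else 0\<^sub>m (2^n) (2^n))}
      = (SUP i\<in>UNIV. \<alpha> {r i})"
    by (rule alpha_msuminf) (use D summable eq M in auto)
  with eq show ?thesis by simp
qed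

lemma alpha_image_add:
  assumes g: "alpha_congruent n \<alpha> g" and h: "alpha_congruent n \<alpha> h"
    and D: "\<forall>\<rho>\<in>Dens n. g \<rho> + h \<rho> \<in> Dens n" and R: "R \<subseteq> Dens n"
  shows "\<alpha> ((\<lambda>\<rho>. g \<rho> + h \<rho>) ` R) = sup (\<alpha> (g ` R)) (\<alpha> (h ` R))"
proof -
  have "\<alpha> ((\<lambda>\<rho>. g \<rho> + h \<rho>) ` R) = (SUP \<rho>\<in>R. \<alpha> {g \<rho> + h \<rho>})"
    by (rule alpha_image_eq_SUP) (use D R in blast)
  also have "\<dots> = (SUP \<rho>\<in>R. sup (\<alpha> {g \<rho>}) (\<alpha> {h \<rho>}))"
  proof (rule SUP_cong[OF refl])
    fix \<rho> assume "\<rho> \<in> R"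
    then have "\<rho> \<in> Dens n" using R by blast
    then have "g \<rho> \<in> Dens n" "h \<rho> \<in> Dens n" "g \<rho> + h \<rho> \<in> Dens n"
      using g h D unfolding alpha_congruent_def by blast+
    then show "\<alpha> {g \<rho> + h \<rho>} = sup (\<alpha> {g \<rho>}) (\<alpha> {h \<rho>})" by (rule alpha_add)
  qed
  also have "\<dots> = sup (\<alpha> (g ` R)) (\<alpha> (h ` R))"
    using alpha_image_eq_SUP[OF alpha_congruent_image_Dens[OF g R]]
      alpha_image_eq_SUP[OF alpha_congruent_image_Dens[OF h R]]
    by (simp add: Complete_Lattices.SUP_sup_distrib)
  finally show ?thesis .
qed

lemma alpha_congruent_add:
  assumes "alpha_congruent n \<alpha> g" "alpha_congruent n \<alpha> h" "\<forall>\<rho>\<in>Dens n. g \<rho> + h \<rho> \<in> Dens n"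
  shows "alpha_congruent n \<alpha> (\<lambda>\<rho>. g \<rho> + h \<rho>)"
  unfolding alpha_congruent_def
proof (intro conjI allI impI)
  fix R1 R2 assume R: "R1 \<subseteq> Dens n" "R2 \<subseteq> Dens n" "\<alpha> R1 = \<alpha> R2"
  then have "\<alpha> (g ` R1) = \<alpha> (g ` R2)" "\<alpha> (h ` R1) = \<alpha> (h ` R2)"
    using assms(1,2) unfolding alpha_congruent_def by blast+
  then show "\<alpha> ((\<lambda>\<rho>. g \<rho> + h \<rho>) ` R1) = \<alpha> ((\<lambda>\<rho>. g \<rho> + h \<rho>) ` R2)"
    by (simp add: alpha_image_add[OF assms R(1)] alpha_image_add[OF assms R(2)])
qed (use assms(3) in blast)

lemma alpha_image_msuminf:
  assumes T: "\<And>i. alpha_congruent n \<alpha> (T i)"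
    and D: "\<forall>\<rho>\<in>Dens n. (\<forall>a<2^n. \<forall>b<2^n. summable (\<lambda>i. T i \<rho> $$ (a,b))) \<and>
              msuminf (2^n) (\<lambda>i. T i \<rho>) \<in> Dens n"
    and R: "R \<subseteq> Dens n"
  shows "\<alpha> ((\<lambda>\<rho>. msuminf (2^n) (\<lambda>i. T i \<rho>)) ` R) = (SUP i. \<alpha> (T i ` R))"
proof -
  have "\<alpha> ((\<lambda>\<rho>. msuminf (2^n) (\<lambda>i. T i \<rho>)) ` R) = (SUP \<rho>\<in>R. \<alpha> {msuminf (2^n) (\<lambda>i. T i \<rho>)})"
    by (rule alpha_image_eq_SUP) (use D R in blast)
  also have "\<dots> = (SUP \<rho>\<in>R. SUP i. \<alpha> {T i \<rho>})"
  proof (rule SUP_cong[OF refl])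
    fix \<rho> assume "\<rho> \<in> R"
    then have "\<rho> \<in> Dens n" using R by blast
    then show "\<alpha> {msuminf (2^n) (\<lambda>i. T i \<rho>)} = (SUP i. \<alpha> {T i \<rho>})"
      using T D unfolding alpha_congruent_def by (intro alpha_msuminf_seq) blast+
  qed
  also have "\<dots> = (SUP i. \<alpha> (T i ` R))"
    by (subst SUP_commute) (simp add: alpha_image_eq_SUP[OF alpha_congruent_image_Dens[OF T R]])
  finally show ?thesis .
qed

lemma alpha_congruent_msuminf:
  assumes "\<And>i. alpha_congruent n \<alpha> (T i)"
    and "\<forall>\<rho>\<in>Dens n. (\<forall>a<2^n. \<forall>b<2^n. summable (\<lambda>i. T i \<rho> $$ (a,b))) \<and>
           msuminf (2^n) (\<lambda>i. T i \<rho>) \<in> Dens n"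
  shows "alpha_congruent n \<alpha> (\<lambda>\<rho>. msuminf (2^n) (\<lambda>i. T i \<rho>))"
  unfolding alpha_congruent_def
proof (intro conjI allI impI)
  fix R1 R2 assume R: "R1 \<subseteq> Dens n" "R2 \<subseteq> Dens n" "\<alpha> R1 = \<alpha> R2"
  then have "\<alpha> (T i ` R1) = \<alpha> (T i ` R2)" for i
    using assms(1)[of i] unfolding alpha_congruent_def by blast
  then show "\<alpha> ((\<lambda>\<rho>. msuminf (2^n) (\<lambda>i. T i \<rho>)) ` R1) = \<alpha> ((\<lambda>\<rho>. msuminf (2^n) (\<lambda>i. T i \<rho>)) ` R2)"
    by (simp add: alpha_image_msuminf[OF assms R(1)] alpha_image_msuminf[OF assms R(2)])
qed (use assms(2) in blast)

context
  fixes absop :: "prog \<Rightarrow> 'a \<Rightarrow> 'a"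
  assumes CA: "\<And>e. basic e \<Longrightarrow> wf_prog n e \<Longrightarrow> complete_abs n \<alpha> e (absop e)"
begin

lemma sem_basic_alpha_congruent:
  assumes "basic e" "wf_prog n e"
  shows "alpha_congruent n \<alpha> (sem n e)"
proof -
  have "\<alpha> (sem n e ` R) = absop e (\<alpha> R)" if "R \<subseteq> Dens n" for R
    using CA[OF assms] that by (simp add: complete_abs_def semQ_def)
  then show ?thesis using sem_Dens[OF assms(2)] unfolding alpha_congruent_def by metis
qed

lemma sem_alpha_congruent: "wf_prog n S \<Longrightarrow> alpha_congruent n \<alpha> (sem n S)"
proof (induction S)
  case (Seq S0 S1)
  then show ?case unfolding sem_Seq_eq_comp by (intro alpha_congruent_comp) auto
next
  case (If qs P S1 S0)
  then have "alpha_congruent n \<alpha> (sem n (Assert qs P))" "alpha_congruent n \<alpha> (sem n (Assert qs (perp qs P)))"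
    by (auto intro!: sem_basic_alpha_congruent simp: projector_perp)
  with If have "alpha_congruent n \<alpha> (sem n (Seq (Assert qs P) S1))"
    "alpha_congruent n \<alpha> (sem n (Seq (Assert qs (perp qs P)) S0))"
    unfolding sem_Seq_eq_comp by (auto intro: alpha_congruent_comp)
  moreover have "\<forall>\<rho>\<in>Dens n. sem n (Seq (Assert qs P) S1) \<rho> + sem n (Seq (Assert qs (perp qs P)) S0) \<rho> \<in> Dens n"
    using sem_Dens[OF If.prems] by simp
  ultimately show ?case unfolding sem_If_eq by (rule alpha_congruent_add)
next
  case (While qs P S)
  then have "alpha_congruent n \<alpha> (sem n (Assert qs P))" "alpha_congruent n \<alpha> (sem n (Assert qs (perp qs P)))"
    by (auto intro!: sem_basic_alpha_congruent simp: projector_perp)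
  with While have "alpha_congruent n \<alpha> (sem n (Assert qs (perp qs P)) \<circ> (sem n (Seq (Assert qs P) S) ^^ i))" for i
    unfolding sem_Seq_eq_comp by (auto intro: alpha_congruent_comp alpha_congruent_funpow)
  then show ?case unfolding sem_While_eq by (rule alpha_congruent_msuminf[OF _ while_series_Dens[OF While.prems]])
qed (auto intro: sem_basic_alpha_congruent)

lemma alpha_image_sem:
  "wf_prog n S \<Longrightarrow> R \<subseteq> Dens n \<Longrightarrow> \<alpha> (sem n S ` R) = best_abs n \<alpha> \<gamma> S (\<alpha> R)"
  unfolding best_abs_def semQ_def by (rule alpha_congruent_image_eq[OF sem_alpha_congruent])

lemma best_abs_mono:
  assumes "wf_prog n S" "a \<le> b"
  shows "best_abs n \<alpha> \<gamma> S a \<le> best_abs n \<alpha> \<gamma> S b"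
  unfolding best_abs_def semQ_def
  using gamma_mono[OF assms(2)] alpha_congruent_image_Dens[OF sem_alpha_congruent[OF assms(1)] gamma_subset_Dens]
  by (intro alpha_mono) auto

lemma best_abs_basic:
  assumes "basic e" "wf_prog n e"
  shows "best_abs n \<alpha> \<gamma> e a = absop e a"
  using CA[OF assms] gamma_subset_Dens[of a] alpha_gamma[of a]
  unfolding best_abs_def complete_abs_def by metis

lemma best_abs_Seq:
  assumes "wf_prog n S0" "wf_prog n S1"
  shows "best_abs n \<alpha> \<gamma> (Seq S0 S1) a = best_abs n \<alpha> \<gamma> S1 (best_abs n \<alpha> \<gamma> S0 a)"
proof -
  have "best_abs n \<alpha> \<gamma> (Seq S0 S1) a = \<alpha> (sem n S1 ` sem n S0 ` \<gamma> a)"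
    unfolding best_abs_def semQ_def by (simp add: image_image)
  also have "\<dots> = best_abs n \<alpha> \<gamma> S1 (best_abs n \<alpha> \<gamma> S0 a)"
    using alpha_image_sem[OF assms(2) alpha_congruent_image_Dens[OF sem_alpha_congruent[OF assms(1)] gamma_subset_Dens]]
    by (simp add: best_abs_def semQ_def)
  finally show ?thesis .
qed

lemma best_abs_If:
  assumes "wf_prog n (If qs P S1 S0)"
  shows "best_abs n \<alpha> \<gamma> (If qs P S1 S0) a =
    sup (best_abs n \<alpha> \<gamma> (Seq (Assert qs P) S1) a) (best_abs n \<alpha> \<gamma> (Seq (Assert qs (perp qs P)) S0) a)"
proof -
  have "wf_prog n (Seq (Assert qs P) S1)" "wf_prog n (Seq (Assert qs (perp qs P)) S0)"
    using assms by (auto intro: projector_perp)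
  moreover have "\<forall>\<rho>\<in>Dens n. sem n (Seq (Assert qs P) S1) \<rho> + sem n (Seq (Assert qs (perp qs P)) S0) \<rho> \<in> Dens n"
    using sem_Dens[OF assms] by simp
  ultimately show ?thesis
    unfolding best_abs_def semQ_def sem_If_eq
    by (intro alpha_image_add sem_alpha_congruent gamma_subset_Dens)
qed

lemma alpha_image_funpow:
  assumes "wf_prog n S" "R \<subseteq> Dens n"
  shows "\<alpha> ((sem n S ^^ i) ` R) = (best_abs n \<alpha> \<gamma> S ^^ i) (\<alpha> R)"
proof (induction i)
  case (Suc i)
  have "(sem n S ^^ Suc i) ` R = sem n S ` (sem n S ^^ i) ` R" by (simp only: funpow.simps(2) image_comp)
  then have "\<alpha> ((sem n S ^^ Suc i) ` R) = best_abs n \<alpha> \<gamma> S (\<alpha> ((sem n S ^^ i) ` R))"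
    using alpha_image_sem[OF assms(1) alpha_congruent_image_Dens[OF
        alpha_congruent_funpow[OF sem_alpha_congruent[OF assms(1)]] assms(2)]]
    by (simp only:)
  with Suc.IH show ?case by simp
qed simp

lemma best_abs_While:
  assumes w: "wf_prog n (While qs P S)"
  shows "best_abs n \<alpha> \<gamma> (While qs P S) a =
    (SUP i. best_abs n \<alpha> \<gamma> (Assert qs (perp qs P)) ((best_abs n \<alpha> \<gamma> (Seq (Assert qs P) S) ^^ i) a))"
proof -
  let ?g = "sem n (Seq (Assert qs P) S)" and ?f = "sem n (Assert qs (perp qs P))"
  have wg: "wf_prog n (Seq (Assert qs P) S)" and wf: "wf_prog n (Assert qs (perp qs P))"
    using assms by (auto intro: projector_perp)
  have g: "alpha_congruent n \<alpha> (?g ^^ i)" for i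
    by (rule alpha_congruent_funpow[OF sem_alpha_congruent[OF wg]])
  have "best_abs n \<alpha> \<gamma> (While qs P S) a = (SUP i. \<alpha> ((?f \<circ> (?g ^^ i)) ` \<gamma> a))"
    unfolding best_abs_def semQ_def sem_While_eq
    by (rule alpha_image_msuminf[OF alpha_congruent_comp[OF g sem_alpha_congruent[OF wf]]
          while_series_Dens[OF w] gamma_subset_Dens])
  moreover have "\<alpha> ((?f \<circ> (?g ^^ i)) ` \<gamma> a) = best_abs n \<alpha> \<gamma> (Assert qs (perp qs P)) (\<alpha> ((?g ^^ i) ` \<gamma> a))"
    for i unfolding image_comp[symmetric]
    by (rule alpha_image_sem[OF wf alpha_congruent_image_Dens[OF g gamma_subset_Dens]])
  ultimately show ?thesis by (simp add: alpha_image_funpow[OF wg gamma_subset_Dens])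
qed

theorem derivable_in_sound:
  "derivable_in absop a S b \<Longrightarrow> wf_prog n S \<Longrightarrow> b \<le> best_abs n \<alpha> \<gamma> S a"
proof (induction rule: derivable_in.induct)
  case (ExpIn e a)
  then show ?case by (simp add: best_abs_basic)
next
  case (SeqIn a S0 a' S1 b)
  then have "b \<le> best_abs n \<alpha> \<gamma> S1 (best_abs n \<alpha> \<gamma> S0 a)"
    using best_abs_mono[of S1 a'] by (auto intro: order_trans)
  with SeqIn.prems show ?case by (simp add: best_abs_Seq)
next
  case (ImpIn a' a S b' b)
  then show ?case using best_abs_mono[of S a' a] by (meson order_trans)
next
  case (MeasIn a qs P S1 b1 S0 b0)
  then show ?case by (auto simp: best_abs_If intro: le_supI1 le_supI2 projector_perp)
next
  case (WhileIn as qs P S bs)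
  let ?G = "best_abs n \<alpha> \<gamma> (Seq (Assert qs P) S)" and ?F = "best_abs n \<alpha> \<gamma> (Assert qs (perp qs P))"
  have wg: "wf_prog n (Seq (Assert qs P) S)" and wf: "wf_prog n (Assert qs (perp qs P))"
    using WhileIn by (auto intro: projector_perp)
  have "as i \<le> (?G ^^ i) (as 0)" for i
  proof (induction i)
    case (Suc i)
    have "as (Suc i) \<le> ?G (as i)" using WhileIn wg by blast
    also have "\<dots> \<le> ?G ((?G ^^ i) (as 0))" by (rule best_abs_mono[OF wg Suc.IH])
    finally show ?case by simp
  qed simp
  then have "bs i \<le> ?F ((?G ^^ i) (as 0))" for i
    using WhileIn wf best_abs_mono[OF wf] by (blast intro: order_trans)
  then show ?case using best_abs_While[OF WhileIn.prems] by (simp add: SUP_mono')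
qed

lemma derivable_in_Seq_best_abs:
  assumes "wf_prog n S0" "wf_prog n S1"
    and "\<And>c. derivable_in absop c S0 (best_abs n \<alpha> \<gamma> S0 c)"
    and "\<And>c. derivable_in absop c S1 (best_abs n \<alpha> \<gamma> S1 c)"
  shows "derivable_in absop a (Seq S0 S1) (best_abs n \<alpha> \<gamma> (Seq S0 S1) a)"
  using derivable_in.SeqIn[OF assms(3,4)] by (simp add: best_abs_Seq[OF assms(1,2)])

lemma derivable_in_basic_best_abs:
  "basic e \<Longrightarrow> wf_prog n e \<Longrightarrow> derivable_in absop a e (best_abs n \<alpha> \<gamma> e a)"
  by (simp add: best_abs_basic derivable_in.ExpIn)

theorem derivable_in_best_abs: "wf_prog n S \<Longrightarrow> derivable_in absop a S (best_abs n \<alpha> \<gamma> S a)"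
proof (induction S arbitrary: a)
  case (Seq S0 S1)
  then show ?case by (intro derivable_in_Seq_best_abs) auto
next
  case (If qs P S1 S0)
  then have w: "wf_prog n (Assert qs P)" "wf_prog n (Assert qs (perp qs P))" "wf_prog n S1" "wf_prog n S0"
    by (simp_all add: projector_perp)
  have "derivable_in absop c (Assert qs P) (best_abs n \<alpha> \<gamma> (Assert qs P) c)"
    "derivable_in absop c (Assert qs (perp qs P)) (best_abs n \<alpha> \<gamma> (Assert qs (perp qs P)) c)" for c
    using w by (simp_all add: derivable_in_basic_best_abs)
  note seq = derivable_in_Seq_best_abs[OF w(1,3) this(1) If.IH(1)[OF w(3)]]
    derivable_in_Seq_best_abs[OF w(2,4) this(2) If.IH(2)[OF w(4)]]
  from derivable_in.MeasIn[OF seq] show ?case by (simp add: best_abs_If[OF If.prems] sup_commute)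
next
  case (While qs P S)
  let ?G = "best_abs n \<alpha> \<gamma> (Seq (Assert qs P) S)" and ?F = "best_abs n \<alpha> \<gamma> (Assert qs (perp qs P))"
  have w: "wf_prog n (Assert qs P)" "wf_prog n (Assert qs (perp qs P))" "wf_prog n S"
    using While.prems by (simp_all add: projector_perp)
  then have assert: "derivable_in absop c (Assert qs P) (best_abs n \<alpha> \<gamma> (Assert qs P) c)"
    "derivable_in absop c (Assert qs (perp qs P)) (?F c)" for c
    by (simp_all add: derivable_in_basic_best_abs)
  note body = derivable_in_Seq_best_abs[OF w(1,3) assert(1) While.IH[OF w(3)]]
  have "derivable_in absop ((?G ^^ 0) a) (While qs P S) (SUP i. ?F ((?G ^^ i) a))"
    using body assert(2) by (intro derivable_in.WhileIn) simp
  then show ?case by (simp add: best_abs_While[OF While.prems])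
qed (auto intro: derivable_in_basic_best_abs)

end

end

theorem mainTheorem10:
  fixes n :: nat
    and \<alpha> :: "complex mat set \<Rightarrow> 'a::complete_lattice"
    and \<gamma> :: "'a \<Rightarrow> complex mat set"
    and absop :: "prog \<Rightarrow> 'a \<Rightarrow> 'a"
  assumes "well_structured n \<alpha> \<gamma>"
    and "\<And>e. basic e \<Longrightarrow> wf_prog n e \<Longrightarrow> mono (absop e)"
    and "\<And>e. basic e \<Longrightarrow> wf_prog n e \<Longrightarrow> complete_abs n \<alpha> e (absop e)"
  shows "\<forall>S a b. wf_prog n S \<longrightarrow> (derivable_in absop a S b \<longleftrightarrow> valid_in n \<alpha> \<gamma> a S b)"
proof (intro allI impI iffI)
  fix S a b assume wf: "wf_prog n S"
  show "valid_in n \<alpha> \<gamma> a S b" if "derivable_in absop a S b"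
    using derivable_in_sound[OF assms(1,3) that wf] by (simp add: valid_in_def)
  show "derivable_in absop a S b" if "valid_in n \<alpha> \<gamma> a S b"
    using derivable_in.ImpIn[OF order.refl derivable_in_best_abs[OF assms(1,3) wf]] that
    by (simp add: valid_in_def)
qed

end
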